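(* For any theory $\Sigma$ and any formula $A \Rightarrow B$, the following are equivalent: (1) $\Sigma \models A \Rightarrow B$; (2) $[A]_\Sigma \models A \Rightarrow B$; (3) $B \subseteq [A]_\Sigma$.
   Context: $Y$ is a non-empty finite set of attributes and $\mathcal{T}_Y = \{y^i \mid y \in Y, i \in \mathbb{Z}\}$. For $M \subseteq \mathcal{T}_Y$ and $j \in \mathbb{Z}$, $M + j = \{y^{i+j} \mid y^i \in M\}$. A formula is $A \Rightarrow B$ with $A,B$ finite subsets of $\mathcal{T}_Y$; $M \models A \Rightarrow B$ means that for every $i \in \mathbb{Z}$, $A+i \subseteq M$ implies $B+i \subseteq M$. For a theory $\Sigma$, $\mathrm{Mod}(\Sigma)$ is the set of all $M \subseteq \mathcal{T}_Y$ in which all formulas of $\Sigma$ are true; $\Sigma \models A \Rightarrow B$ means $M \models A \Rightarrow B$ for all $M \in \mathrm{Mod}(\Sigma)$; $[M]_\Sigma = \bigcap\{N \in \mathrm{Mod}(\Sigma) \mid M \subseteq N\}$. *)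

theory Defs
  imports Main
begin

text \<open>Temporal attributes y^i are represented as pairs (y, i) :: 'y \<times> int.
  The set of all temporal attributes over the attribute set Y is T Y.\<close>

definition T :: "'y set \<Rightarrow> ('y \<times> int) set" where
  "T Y = Y \<times> (UNIV :: int set)"

definition shift :: "('y \<times> int) set \<Rightarrow> int \<Rightarrow> ('y \<times> int) set" where
  "shift M j = {(y, i + j) | y i. (y, i) \<in> M}"

text \<open>A formula A \<Rightarrow> B is a pair (A, B) of finite subsets of T Y.\<close>

definition is_formula :: "'y set \<Rightarrow> ('y \<times> int) set \<times> ('y \<times> int) set \<Rightarrow> bool" where
  "is_formula Y f \<longleftrightarrow> finite (fst f) \<and> finite (snd f) \<and> fst f \<subseteq> T Y \<and> snd f \<subseteq> T Y"

definition sat :: "('y \<times> int) set \<Rightarrow> ('y \<times> int) set \<times> ('y \<times> int) set \<Rightarrow> bool" where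
  "sat M f \<longleftrightarrow> (\<forall>i::int. shift (fst f) i \<subseteq> M \<longrightarrow> shift (snd f) i \<subseteq> M)"

definition Mod :: "'y set \<Rightarrow> (('y \<times> int) set \<times> ('y \<times> int) set) set \<Rightarrow> ('y \<times> int) set set" where
  "Mod Y \<Sigma> = {M. M \<subseteq> T Y \<and> (\<forall>f\<in>\<Sigma>. sat M f)}"

definition entails :: "'y set \<Rightarrow> (('y \<times> int) set \<times> ('y \<times> int) set) set
    \<Rightarrow> ('y \<times> int) set \<times> ('y \<times> int) set \<Rightarrow> bool" where
  "entails Y \<Sigma> f \<longleftrightarrow> (\<forall>M\<in>Mod Y \<Sigma>. sat M f)"

definition closure :: "'y set \<Rightarrow> (('y \<times> int) set \<times> ('y \<times> int) set) set
    \<Rightarrow> ('y \<times> int) set \<Rightarrow> ('y \<times> int) set" where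
  "closure Y \<Sigma> M = \<Inter> {N \<in> Mod Y \<Sigma>. M \<subseteq> N}"

end

theory Submission
  imports Defs
begin

text \<open>Models are closed under shifts and under intersections, so \<open>[A]\<^sub>\<Sigma>\<close> is itself the
  least model containing \<open>A\<close>. Hence (1) gives (2), and (2) at shift \<open>0\<close> gives (3).
  Conversely, if \<open>A + i \<subseteq> M\<close> for a model \<open>M\<close>, then \<open>M - i\<close> is a model containing \<open>A\<close>,
  so \<open>B \<subseteq> [A]\<^sub>\<Sigma> \<subseteq> M - i\<close>, i.e. \<open>B + i \<subseteq> M\<close>.\<close>

lemma shift_shift [simp]: "shift (shift M i) j = shift M (i + j)"
  unfolding shift_def by (auto simp: algebra_simps)

lemma shift_0 [simp]: "shift M 0 = M"
  unfolding shift_def by auto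

lemma shift_mono: "M \<subseteq> N \<Longrightarrow> shift M i \<subseteq> shift N i"
  unfolding shift_def by auto

lemma shift_subset_iff: "shift A i \<subseteq> M \<longleftrightarrow> A \<subseteq> shift M (- i)"
proof
  assume "shift A i \<subseteq> M"
  then have "shift (shift A i) (- i) \<subseteq> shift M (- i)" by (rule shift_mono)
  then show "A \<subseteq> shift M (- i)" by simp
next
  assume "A \<subseteq> shift M (- i)"
  then have "shift A i \<subseteq> shift (shift M (- i)) i" by (rule shift_mono)
  then show "shift A i \<subseteq> M" by simp
qed

lemma shift_subset_T: "M \<subseteq> T Y \<Longrightarrow> shift M i \<subseteq> T Y"
  unfolding shift_def T_def by auto

lemma sat_shift: "sat M f \<Longrightarrow> sat (shift M j) f"
  unfolding sat_def shift_subset_iff by simp (metis minus_diff_eq)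

lemma shift_in_Mod: "M \<in> Mod Y \<Sigma> \<Longrightarrow> shift M j \<in> Mod Y \<Sigma>"
  unfolding Mod_def using sat_shift shift_subset_T by blast

lemma T_in_Mod: "\<forall>f\<in>\<Sigma>. snd f \<subseteq> T Y \<Longrightarrow> T Y \<in> Mod Y \<Sigma>"
  unfolding Mod_def sat_def using shift_subset_T by blast

lemma Inter_in_Mod:
  assumes "\<N> \<noteq> {}" and "\<N> \<subseteq> Mod Y \<Sigma>"
  shows "\<Inter>\<N> \<in> Mod Y \<Sigma>"
proof -
  have "sat (\<Inter>\<N>) f" if "f \<in> \<Sigma>" for f
    using that assms(2) unfolding sat_def Mod_def by blast
  moreover have "\<Inter>\<N> \<subseteq> T Y"
    using assms unfolding Mod_def by blast
  ultimately show ?thesis unfolding Mod_def by blast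
qed

lemma subset_closure: "A \<subseteq> closure Y \<Sigma> A"
  unfolding closure_def by blast

lemma closure_least: "M \<in> Mod Y \<Sigma> \<Longrightarrow> A \<subseteq> M \<Longrightarrow> closure Y \<Sigma> A \<subseteq> M"
  unfolding closure_def by blast

lemma closure_in_Mod:
  assumes "\<forall>f\<in>\<Sigma>. snd f \<subseteq> T Y" and "A \<subseteq> T Y"
  shows "closure Y \<Sigma> A \<in> Mod Y \<Sigma>"
  unfolding closure_def
  using T_in_Mod[OF assms(1)] assms(2) by (intro Inter_in_Mod) auto

lemma subset_closure_if_sat_closure:
  "sat (closure Y \<Sigma> A) (A, B) \<Longrightarrow> B \<subseteq> closure Y \<Sigma> A"
  unfolding sat_def using subset_closure by (metis fst_conv snd_conv shift_0)

lemma entails_if_subset_closure: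
  assumes "B \<subseteq> closure Y \<Sigma> A"
  shows "entails Y \<Sigma> (A, B)"
  unfolding entails_def sat_def
proof (intro ballI allI impI)
  fix M i
  assume "M \<in> Mod Y \<Sigma>" and "shift (fst (A, B)) i \<subseteq> M"
  then have "closure Y \<Sigma> A \<subseteq> shift M (- i)"
    by (intro closure_least shift_in_Mod) (simp_all add: shift_subset_iff)
  with assms show "shift (snd (A, B)) i \<subseteq> M"
    by (simp add: shift_subset_iff)
qed

lemma sat_closure_if_entails:
  assumes "\<forall>f\<in>\<Sigma>. snd f \<subseteq> T Y" and "A \<subseteq> T Y"
    and "entails Y \<Sigma> (A, B)"
  shows "sat (closure Y \<Sigma> A) (A, B)"
  using assms(3) closure_in_Mod[OF assms(1,2)] unfolding entails_def by blast

theorem theorem4: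
  fixes Y :: "'y set" and \<Sigma> :: "(('y \<times> int) set \<times> ('y \<times> int) set) set"
    and A B :: "('y \<times> int) set"
  assumes "finite Y" and "Y \<noteq> {}"
    and "\<forall>f\<in>\<Sigma>. is_formula Y f"
    and "is_formula Y (A, B)"
  shows "(entails Y \<Sigma> (A, B) \<longleftrightarrow> sat (closure Y \<Sigma> A) (A, B))
       \<and> (sat (closure Y \<Sigma> A) (A, B) \<longleftrightarrow> B \<subseteq> closure Y \<Sigma> A)"
proof -
  have "\<forall>f\<in>\<Sigma>. snd f \<subseteq> T Y" and "A \<subseteq> T Y"
    using assms(3,4) unfolding is_formula_def by auto
  then have "entails Y \<Sigma> (A, B) \<Longrightarrow> sat (closure Y \<Sigma> A) (A, B)"
    by (rule sat_closure_if_entails)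
  moreover have "sat (closure Y \<Sigma> A) (A, B) \<Longrightarrow> B \<subseteq> closure Y \<Sigma> A"
    by (rule subset_closure_if_sat_closure)
  moreover have "B \<subseteq> closure Y \<Sigma> A \<Longrightarrow> entails Y \<Sigma> (A, B)"
    by (rule entails_if_subset_closure)
  ultimately show ?thesis by blast
qed

end
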